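(* Let $n\ge 1$, $m\ge 2$, $0\le k\le n-1$ with $(m,k)\ne(2,0)$. Then the class $\mathcal{C}^k_{ac}$ of all complete $k$-bounded acyclic CP-nets over $n$ variables of domain size $m$, over the instance space $\mathcal{X}_{swap}$ (for any admissible choice of $\mathcal{X}_{swap}$), is not intersection-closed.
   Context: Variables $V=\{v_1,\dots,v_n\}$, each with a finite domain of size $m$. An outcome assigns a value to every variable; $\mathcal{O}_X$ denotes assignments to $X\subseteq V$. A complete CP-net specifies for each $v_i$ a parent set $Pa(v_i)\subseteq V\setminus\{v_i\}$ and, for each context $\gamma\in\mathcal{O}_{Pa(v_i)}$, a strict total order $\succ^{v_i}_\gamma$ on $D_{v_i}$; parents are non-dummy. Acyclic: graph with edges $(v_j,v_i)$, $v_j\in Pa(v_i)$, acyclic; $k$-bounded: all $|Pa(v_i)|\le k$. Improving flip: changing only $v_i$ to a value preferred under $\succ^{v_i}_{o[Pa(v_i)]}$; $o'\succ o$ iff a nonempty sequence of improving flips leads from $o$ to $o'$. A swap is an ordered pair $x=(x.1,x.2)$ of outcomes differing in exactly one variable; $\mathcal{X}_{swap}$ is any set containing exactly one of the two orderings of each such pair (an admissible choice). A CP-net $N$ is the concept $c_N=\{x\in\mathcal{X}_{swap}: x.1\succ x.2\text{ under }N\}$. A class $\mathcal{C}$ of concepts (subsets of the instance space) is intersection-closed if $c\cap c'\in\mathcal{C}$ for all $c,c'\in\mathcal{C}$. *)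

theory Defs
  imports Main
begin

definition outcomes :: "nat \<Rightarrow> nat \<Rightarrow> (nat \<Rightarrow> nat) set" where
  "outcomes n m = {u. (\<forall>i<n. u i < m) \<and> (\<forall>i\<ge>n. u i = 0)}"

text \<open>A CP-net: parent sets and conditional preference tables.
  cpt i \<gamma> a b means: value a is preferred to value b for variable i
  in the context \<gamma> (an assignment to the parents of i, extended by 0).\<close>
type_synonym cpnet = "(nat \<Rightarrow> nat set) \<times> (nat \<Rightarrow> (nat \<Rightarrow> nat) \<Rightarrow> nat \<Rightarrow> nat \<Rightarrow> bool)"

definition ctx :: "(nat \<Rightarrow> nat set) \<Rightarrow> nat \<Rightarrow> (nat \<Rightarrow> nat) \<Rightarrow> (nat \<Rightarrow> nat)" where
  "ctx Pa i u = (\<lambda>j. if j \<in> Pa i then u j else 0)"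

definition strict_total_on :: "nat set \<Rightarrow> (nat \<Rightarrow> nat \<Rightarrow> bool) \<Rightarrow> bool" where
  "strict_total_on D R \<longleftrightarrow>
     (\<forall>a\<in>D. \<not> R a a) \<and>
     (\<forall>a\<in>D. \<forall>b\<in>D. \<forall>c\<in>D. R a b \<longrightarrow> R b c \<longrightarrow> R a c) \<and>
     (\<forall>a\<in>D. \<forall>b\<in>D. a \<noteq> b \<longrightarrow> R a b \<or> R b a)"

text \<open>Complete, k-bounded, acyclic CP-net over n variables with domain size m,
  all parents non-dummy.\<close>
definition cpnet_ac :: "nat \<Rightarrow> nat \<Rightarrow> nat \<Rightarrow> cpnet \<Rightarrow> bool" where
  "cpnet_ac n m k N \<longleftrightarrow> (let Pa = fst N; cpt = snd N in
     (\<forall>i<n. Pa i \<subseteq> {0..<n} - {i}) \<and>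
     (\<forall>i<n. card (Pa i) \<le> k) \<and>
     acyclic {(j, i). i < n \<and> j \<in> Pa i} \<and>
     (\<forall>i<n. \<forall>u\<in>outcomes n m. strict_total_on {0..<m} (cpt i (ctx Pa i u))) \<and>
     (\<forall>i<n. \<forall>j\<in>Pa i. \<exists>u\<in>outcomes n m. \<exists>a<m. \<exists>x<m. \<exists>y<m.
         cpt i (ctx Pa i u) x y \<noteq> cpt i (ctx Pa i (u(j := a))) x y))"

definition flips :: "nat \<Rightarrow> nat \<Rightarrow> cpnet \<Rightarrow> ((nat \<Rightarrow> nat) \<times> (nat \<Rightarrow> nat)) set" where
  "flips n m N = {(u, u'). u \<in> outcomes n m \<and> u' \<in> outcomes n m \<and>
     (\<exists>i<n. (\<forall>j. j \<noteq> i \<longrightarrow> u' j = u j) \<and> snd N i (ctx (fst N) i u) (u' i) (u i))}"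

definition dominates :: "nat \<Rightarrow> nat \<Rightarrow> cpnet \<Rightarrow> (nat \<Rightarrow> nat) \<Rightarrow> (nat \<Rightarrow> nat) \<Rightarrow> bool" where
  "dominates n m N u' u \<longleftrightarrow> (u, u') \<in> (flips n m N)\<^sup>+"

definition swaps :: "nat \<Rightarrow> nat \<Rightarrow> ((nat \<Rightarrow> nat) \<times> (nat \<Rightarrow> nat)) set" where
  "swaps n m = {(a, b). a \<in> outcomes n m \<and> b \<in> outcomes n m \<and> card {i. a i \<noteq> b i} = 1}"

definition admissible_swap_space :: "nat \<Rightarrow> nat \<Rightarrow> ((nat \<Rightarrow> nat) \<times> (nat \<Rightarrow> nat)) set \<Rightarrow> bool" where
  "admissible_swap_space n m X \<longleftrightarrow> X \<subseteq> swaps n m \<and>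
     (\<forall>a b. (a, b) \<in> swaps n m \<longrightarrow> ((a, b) \<in> X \<longleftrightarrow> (b, a) \<notin> X))"

definition concept :: "nat \<Rightarrow> nat \<Rightarrow> ((nat \<Rightarrow> nat) \<times> (nat \<Rightarrow> nat)) set \<Rightarrow> cpnet
    \<Rightarrow> ((nat \<Rightarrow> nat) \<times> (nat \<Rightarrow> nat)) set" where
  "concept n m X N = {x \<in> X. dominates n m N (fst x) (snd x)}"

definition class_ac :: "nat \<Rightarrow> nat \<Rightarrow> nat \<Rightarrow> ((nat \<Rightarrow> nat) \<times> (nat \<Rightarrow> nat)) set
    \<Rightarrow> ((nat \<Rightarrow> nat) \<times> (nat \<Rightarrow> nat)) set set" where
  "class_ac n m k X = {concept n m X N | N. cpnet_ac n m k N}"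

definition intersection_closed :: "'a set set \<Rightarrow> bool" where
  "intersection_closed C \<longleftrightarrow> (\<forall>c\<in>C. \<forall>c'\<in>C. c \<inter> c' \<in> C)"

end

theory Submission
  imports Defs "HOL-Combinatorics.Transposition"
begin

text \<open>In an acyclic CP-net a nonempty sequence of improving flips never returns to its start,
  so a swap is dominated exactly when the conditional preference table of the swapped variable
  orders it that way. The concept of an intersection of two nets is therefore read off swap by
  swap: a swap oriented as in the instance space survives iff both nets prefer it, the reversed
  one iff both nets prefer that. A net realizing the intersection would need exactly these local
  preferences. With three domain values, two parentless nets ranking the values of one variable
  suitably make these preferences cyclic. With a parent allowed, one net uses the arc 0 to 1 and
  the other the arc 1 to 0, arranged so that the forced preferences at each of the two variables
  depend on the other one; a realizing net would contain both arcs.\<close>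

lemma strict_total_on_irrefl: "strict_total_on D R \<Longrightarrow> a \<in> D \<Longrightarrow> \<not> R a a"
  unfolding strict_total_on_def by blast

lemma strict_total_on_trans:
  "strict_total_on D R \<Longrightarrow> a \<in> D \<Longrightarrow> b \<in> D \<Longrightarrow> c \<in> D \<Longrightarrow> R a b \<Longrightarrow> R b c \<Longrightarrow> R a c"
  unfolding strict_total_on_def by blast

lemma strict_total_on_converse:
  assumes "strict_total_on D R" "a \<in> D" "b \<in> D" "a \<noteq> b"
  shows "R b a \<longleftrightarrow> \<not> R a b"
proof -
  have "\<not> (R a b \<and> R b a)"
    using strict_total_on_trans[OF assms(1-3,2)] strict_total_on_irrefl[OF assms(1,2)] by blast
  moreover have "R a b \<or> R b a" using assms unfolding strict_total_on_def by blast
  ultimately show ?thesis by blast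
qed

lemma strict_total_on_subset: "strict_total_on D R \<Longrightarrow> E \<subseteq> D \<Longrightarrow> strict_total_on E R"
  unfolding strict_total_on_def by (meson subsetD)

lemma strict_total_on_three:
  assumes st: "strict_total_on {0..<3} R" and "R 0 1 = R 1 2"
  shows "R 0 2 = R 0 1"
proof (cases "R 0 1")
  case True
  then show ?thesis using assms(2) strict_total_on_trans[OF st, of 0 1 2] by simp
next
  case False
  then have "R 1 0" "R 2 1"
    using assms(2) strict_total_on_converse[OF st, of 0 1] strict_total_on_converse[OF st, of 1 2] by simp_all
  then have "R 2 0" using strict_total_on_trans[OF st, of 2 1 0] by simp
  then show ?thesis using False strict_total_on_converse[OF st, of 0 2] by simp
qed

definition rank_order :: "(nat \<Rightarrow> nat) \<Rightarrow> nat \<Rightarrow> nat \<Rightarrow> bool" where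
  "rank_order r x y \<longleftrightarrow> r x < r y"

lemma strict_total_on_rank_order:
  assumes "inj_on r D"
  shows "strict_total_on D (rank_order r)"
proof -
  have "r a \<noteq> r b" if "a \<in> D" "b \<in> D" "a \<noteq> b" for a b
    using inj_onD[OF assms] that by blast
  then show ?thesis unfolding strict_total_on_def rank_order_def by (auto simp: nat_neq_iff)
qed

lemma rank_order_transpose_first: "b \<noteq> a \<Longrightarrow> rank_order (transpose 0 a) a b"
  unfolding rank_order_def transpose_def by auto

text \<open>The preference an intersection of two concepts induces on swaps, where q x y says that
  the swap is oriented as (x, y) in the instance space.\<close>

definition meet_pref :: "('a \<Rightarrow> 'a \<Rightarrow> bool) \<Rightarrow> ('a \<Rightarrow> 'a \<Rightarrow> bool) \<Rightarrow> ('a \<Rightarrow> 'a \<Rightarrow> bool) \<Rightarrow> 'a \<Rightarrow> 'a \<Rightarrow> bool" where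
  "meet_pref q R1 R2 x y \<longleftrightarrow> (if q x y then R1 x y \<and> R2 x y else R1 x y \<or> R2 x y)"

lemma rankings_with_cyclic_meet:
  fixes q :: "nat \<Rightarrow> nat \<Rightarrow> bool"
  obtains r1 r2 :: "nat \<Rightarrow> nat" where "inj r1" "inj r2"
    "meet_pref q (rank_order r1) (rank_order r2) 0 1 = meet_pref q (rank_order r1) (rank_order r2) 1 2"
    "meet_pref q (rank_order r1) (rank_order r2) 0 2 \<noteq> meet_pref q (rank_order r1) (rank_order r2) 0 1"
proof -
  txt \<open>In each case, reversing in q every pair on which r1 or r2 disagrees with q yields a
    3-cycle.\<close>
  define cyc where "cyc = transpose 0 1 \<circ> transpose (1::nat) 2"
  define cyc_inv where "cyc_inv = transpose 1 2 \<circ> transpose (0::nat) 1"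
  note simps = meet_pref_def rank_order_def inj_transpose inj_compose cyc_def cyc_inv_def
  show thesis
  proof (cases "q 0 1"; cases "q 1 2"; cases "q 0 2")
    assume "q 0 1" "q 1 2" "q 0 2"
    then show thesis by (intro that[of "transpose 1 2" "transpose 0 1"]) (simp_all add: simps)
  next
    assume "q 0 1" "q 1 2" "\<not> q 0 2"
    then show thesis by (intro that[of id "transpose 0 2"]) (simp_all add: simps)
  next
    assume "q 0 1" "\<not> q 1 2" "q 0 2"
    then show thesis by (intro that[of id cyc]) (simp_all add: simps)
  next
    assume "q 0 1" "\<not> q 1 2" "\<not> q 0 2"
    then show thesis by (intro that[of "transpose 0 2" "transpose 1 2"]) (simp_all add: simps)
  next
    assume "\<not> q 0 1" "q 1 2" "q 0 2"
    then show thesis by (intro that[of cyc_inv id]) (simp_all add: simps)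
  next
    assume "\<not> q 0 1" "q 1 2" "\<not> q 0 2"
    then show thesis by (intro that[of "transpose 0 1" "transpose 0 2"]) (simp_all add: simps)
  next
    assume "\<not> q 0 1" "\<not> q 1 2" "q 0 2"
    then show thesis by (intro that[of id "transpose 0 2"]) (simp_all add: simps)
  next
    assume "\<not> q 0 1" "\<not> q 1 2" "\<not> q 0 2"
    then show thesis by (intro that[of cyc cyc_inv]) (simp_all add: simps)
  qed
qed

definition parent_rel :: "cpnet \<Rightarrow> nat \<Rightarrow> (nat \<times> nat) set" where
  "parent_rel N n = {(j, i). i < n \<and> j \<in> fst N i}"

lemma
  assumes "cpnet_ac n m k N"
  shows cpnet_ac_parents: "i < n \<Longrightarrow> fst N i \<subseteq> {0..<n} - {i}"
    and cpnet_ac_acyclic: "acyclic (parent_rel N n)"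
    and cpnet_ac_strict_total:
      "i < n \<Longrightarrow> u \<in> outcomes n m \<Longrightarrow> strict_total_on {0..<m} (snd N i (ctx (fst N) i u))"
  using assms unfolding cpnet_ac_def parent_rel_def Let_def by blast+

lemma outcomes_less: "u \<in> outcomes n m \<Longrightarrow> i < n \<Longrightarrow> u i < m"
  unfolding outcomes_def by blast

lemma ctx_cong: "(\<And>j. j \<in> Pa i \<Longrightarrow> u j = v j) \<Longrightarrow> ctx Pa i u = ctx Pa i v"
  unfolding ctx_def by auto

lemma ctx_eq_if_ancestors_fixed:
  assumes "i < n" "\<forall>j. (j, i) \<in> (parent_rel N n)\<^sup>+ \<longrightarrow> v j = u j"
  shows "ctx (fst N) i v = ctx (fst N) i u"
  using assms by (intro ctx_cong) (auto simp: parent_rel_def)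

lemma flipsE:
  assumes "(u, v) \<in> flips n m N"
  obtains i where "i < n" "u \<in> outcomes n m" "v \<in> outcomes n m" "\<forall>j. j \<noteq> i \<longrightarrow> v j = u j"
    "snd N i (ctx (fst N) i u) (v i) (u i)"
  using assms unfolding flips_def by blast

lemma trancl_flips_outcomes:
  "(u, v) \<in> (flips n m N)\<^sup>+ \<Longrightarrow> u \<in> outcomes n m \<and> v \<in> outcomes n m"
  using trancl_subset_Sigma[of "flips n m N" "outcomes n m"] unfolding flips_def by blast

text \<open>Acyclicity keeps such a witness under each further flip: the flip either improves it
  again, or changes one of its ancestors (which becomes the new witness), or leaves all its
  ancestors alone.\<close>

lemma trancl_flips_improved_variable:
  assumes ac: "cpnet_ac n m k N" and "(u, v) \<in> (flips n m N)\<^sup>+"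
  shows "\<exists>i<n. (\<forall>j. (j, i) \<in> (parent_rel N n)\<^sup>+ \<longrightarrow> v j = u j) \<and> snd N i (ctx (fst N) i u) (v i) (u i)"
  using assms(2)
proof (induction rule: trancl_induct)
  let ?anc = "(parent_rel N n)\<^sup>+"
  have no_self_ancestor: "(j, j) \<notin> ?anc" for j
    using cpnet_ac_acyclic[OF ac] unfolding acyclic_def by blast
  {
    case (base v)
    then obtain i where "i < n" "\<forall>j. j \<noteq> i \<longrightarrow> v j = u j" "snd N i (ctx (fst N) i u) (v i) (u i)"
      by (rule flipsE)
    then show ?case using no_self_ancestor by metis
  next
    case (step y z)
    then obtain i where i: "i < n" and fixed: "\<forall>j. (j, i) \<in> ?anc \<longrightarrow> y j = u j"
      and improved: "snd N i (ctx (fst N) i u) (y i) (u i)" by blast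
    obtain l where l: "l < n" "y \<in> outcomes n m" "z \<in> outcomes n m" and z: "\<forall>j. j \<noteq> l \<longrightarrow> z j = y j"
      and flip: "snd N l (ctx (fst N) l y) (z l) (y l)"
      using step(2) by (rule flipsE)
    have u: "u \<in> outcomes n m" using trancl_flips_outcomes[OF step(1)] by blast
    consider "l = i" | "l \<noteq> i" "(l, i) \<in> ?anc" | "(l, i) \<notin> ?anc" "l \<noteq> i" by blast
    then show ?case
    proof cases
      case 1
      have st: "strict_total_on {0..<m} (snd N i (ctx (fst N) i u))"
        using cpnet_ac_strict_total[OF ac i u] .
      have "snd N i (ctx (fst N) i u) (z i) (y i)"
        using flip 1 ctx_eq_if_ancestors_fixed[OF i fixed] by simp
      moreover have "z i \<in> {0..<m}" "y i \<in> {0..<m}" "u i \<in> {0..<m}"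
        using outcomes_less u l i by auto
      ultimately have "snd N i (ctx (fst N) i u) (z i) (u i)"
        using strict_total_on_trans[OF st] improved by blast
      moreover have "\<forall>j. (j, i) \<in> ?anc \<longrightarrow> z j = u j"
        using fixed z 1 no_self_ancestor by metis
      ultimately show ?thesis using i by blast
    next
      case 2
      have fixed_l: "\<forall>j. (j, l) \<in> ?anc \<longrightarrow> z j = u j"
        using fixed z 2(2) no_self_ancestor by (metis trancl_trans)
      have "ctx (fst N) l y = ctx (fst N) l u"
        using ctx_eq_if_ancestors_fixed[OF l(1)] fixed 2(2) by (metis trancl_trans)
      moreover have "y l = u l" using fixed 2(2) by blast
      ultimately show ?thesis using l(1) fixed_l flip by auto
    next
      case 3
      then show ?thesis using i fixed z improved by metis
    qed
  }
qed

lemma trancl_flips_irrefl: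
  assumes ac: "cpnet_ac n m k N"
  shows "(u, u) \<notin> (flips n m N)\<^sup>+"
proof
  assume path: "(u, u) \<in> (flips n m N)\<^sup>+"
  then obtain i where i: "i < n" and loop: "snd N i (ctx (fst N) i u) (u i) (u i)"
    using trancl_flips_improved_variable[OF ac] by blast
  have u: "u \<in> outcomes n m" using trancl_flips_outcomes[OF path] by blast
  then have "u i \<in> {0..<m}" using outcomes_less i by simp
  then show False
    using loop strict_total_on_irrefl[OF cpnet_ac_strict_total[OF ac i u]] by blast
qed

definition swap_at :: "nat \<Rightarrow> nat \<Rightarrow> nat \<Rightarrow> (nat \<Rightarrow> nat) \<Rightarrow> (nat \<Rightarrow> nat) \<Rightarrow> bool" where
  "swap_at n m i a b \<longleftrightarrow>
     a \<in> outcomes n m \<and> b \<in> outcomes n m \<and> i < n \<and> a i \<noteq> b i \<and> (\<forall>j. j \<noteq> i \<longrightarrow> a j = b j)"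

lemma swap_at_sym: "swap_at n m i a b \<Longrightarrow> swap_at n m i b a"
  unfolding swap_at_def by metis

lemma swap_at_orientation:
  assumes "admissible_swap_space n m X" "swap_at n m i a b"
  shows "(b, a) \<in> X \<longleftrightarrow> (a, b) \<notin> X"
proof -
  have "{j. a j \<noteq> b j} = {i}" using assms(2) unfolding swap_at_def by auto
  then have "(a, b) \<in> swaps n m" using assms(2) unfolding swaps_def swap_at_def by simp
  then show ?thesis using assms(1) unfolding admissible_swap_space_def by blast
qed

lemma admissible_swap_space_choose:
  assumes "admissible_swap_space n m X" "swap_at n m i (f 0) (f 1)"
  obtains x :: nat where "x < 2" "(f x, f (1 - x)) \<in> X"
proof (cases "(f 0, f 1) \<in> X")
  case True
  then show thesis using that[of 0] by simp
next
  case False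
  then show thesis using that[of 1] swap_at_orientation[OF assms] by simp
qed

definition swap_pref :: "cpnet \<Rightarrow> nat \<Rightarrow> (nat \<Rightarrow> nat) \<Rightarrow> (nat \<Rightarrow> nat) \<Rightarrow> bool" where
  "swap_pref N i a b \<longleftrightarrow> snd N i (ctx (fst N) i b) (a i) (b i)"

lemma swap_pref_converse:
  assumes ac: "cpnet_ac n m k N" and sw: "swap_at n m i a b"
  shows "swap_pref N i b a \<longleftrightarrow> \<not> swap_pref N i a b"
proof -
  have "ctx (fst N) i a = ctx (fst N) i b"
    using sw cpnet_ac_parents[OF ac] unfolding swap_at_def by (intro ctx_cong) blast
  moreover have "strict_total_on {0..<m} (snd N i (ctx (fst N) i b))"
    using sw cpnet_ac_strict_total[OF ac] unfolding swap_at_def by blast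
  moreover have "a i \<in> {0..<m}" "b i \<in> {0..<m}" "a i \<noteq> b i"
    using sw outcomes_less unfolding swap_at_def by auto
  ultimately show ?thesis unfolding swap_pref_def using strict_total_on_converse by metis
qed

lemma flips_swap_iff: "swap_at n m i a b \<Longrightarrow> (b, a) \<in> flips n m N \<longleftrightarrow> swap_pref N i a b"
  unfolding swap_at_def swap_pref_def flips_def by (auto, metis)

lemma dominates_swap_iff:
  assumes ac: "cpnet_ac n m k N" and sw: "swap_at n m i a b"
  shows "dominates n m N a b \<longleftrightarrow> swap_pref N i a b"
proof
  assume dom: "dominates n m N a b"
  show "swap_pref N i a b"
  proof (rule ccontr)
    assume "\<not> swap_pref N i a b"
    then have "(a, b) \<in> flips n m N"
      using flips_swap_iff[OF swap_at_sym[OF sw]] swap_pref_converse[OF ac sw] by blast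
    with dom have "(b, b) \<in> (flips n m N)\<^sup>+" unfolding dominates_def by simp
    then show False using trancl_flips_irrefl[OF ac] by blast
  qed
next
  assume "swap_pref N i a b"
  then show "dominates n m N a b" using flips_swap_iff[OF sw] unfolding dominates_def by blast
qed

lemma concept_swap_iff:
  assumes "cpnet_ac n m k N" "swap_at n m i a b" "(a, b) \<in> X"
  shows "(a, b) \<in> concept n m X N \<longleftrightarrow> swap_pref N i a b"
  using dominates_swap_iff[OF assms(1,2)] assms(3) unfolding concept_def by simp

lemma swap_pref_concept_inter:
  assumes ac: "cpnet_ac n m k N" "cpnet_ac n m k N1" "cpnet_ac n m k N2"
    and inter: "concept n m X N = concept n m X N1 \<inter> concept n m X N2"
    and adm: "admissible_swap_space n m X" and sw: "swap_at n m i a b"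
  shows "swap_pref N i a b = meet_pref (\<lambda>a b. (a, b) \<in> X) (swap_pref N1 i) (swap_pref N2 i) a b"
proof (cases "(a, b) \<in> X")
  case True
  then have "swap_pref N i a b \<longleftrightarrow> swap_pref N1 i a b \<and> swap_pref N2 i a b"
    using inter concept_swap_iff[OF _ sw True] ac by blast
  then show ?thesis using True unfolding meet_pref_def by simp
next
  case False
  then have "(b, a) \<in> X" using swap_at_orientation[OF adm sw] by blast
  then have "swap_pref N i b a \<longleftrightarrow> swap_pref N1 i b a \<and> swap_pref N2 i b a"
    using inter concept_swap_iff[OF _ swap_at_sym[OF sw]] ac by blast
  then show ?thesis
    using False swap_pref_converse[OF ac(1) sw] swap_pref_converse[OF ac(2) sw]
      swap_pref_converse[OF ac(3) sw]
    unfolding meet_pref_def by auto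
qed

lemma intersection_closed_class_acD:
  assumes "intersection_closed (class_ac n m k X)" "cpnet_ac n m k N1" "cpnet_ac n m k N2"
  obtains N where "cpnet_ac n m k N" "concept n m X N = concept n m X N1 \<inter> concept n m X N2"
proof -
  have "concept n m X N1 \<inter> concept n m X N2 \<in> class_ac n m k X"
    using assms unfolding intersection_closed_def class_ac_def by blast
  then show thesis using that unfolding class_ac_def by blast
qed

definition flat_net :: "(nat \<Rightarrow> nat) \<Rightarrow> cpnet" where
  "flat_net r = (\<lambda>_. {}, \<lambda>_ _. rank_order r)"

lemma flat_net_ac: "inj_on r {0..<m} \<Longrightarrow> cpnet_ac n m k (flat_net r)"
  unfolding cpnet_ac_def flat_net_def Let_def by (simp add: strict_total_on_rank_order acyclic_def)

lemma swap_pref_flat_net: "swap_pref (flat_net r) i a b \<longleftrightarrow> rank_order r (a i) (b i)"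
  unfolding swap_pref_def flat_net_def by simp

theorem not_intersection_closed_three_values:
  assumes n: "1 \<le> n" and m: "3 \<le> m" and adm: "admissible_swap_space n m X"
  shows "\<not> intersection_closed (class_ac n m k X)"
proof
  assume closed: "intersection_closed (class_ac n m k X)"
  define single where "single x = (\<lambda>_::nat. 0::nat)(0 := x)" for x
  define q where "q x y \<longleftrightarrow> (single x, single y) \<in> X" for x y
  obtain r1 r2 where inj: "inj r1" "inj r2" and cyclic:
      "meet_pref q (rank_order r1) (rank_order r2) 0 1 = meet_pref q (rank_order r1) (rank_order r2) 1 2"
      "meet_pref q (rank_order r1) (rank_order r2) 0 2 \<noteq> meet_pref q (rank_order r1) (rank_order r2) 0 1"
    by (rule rankings_with_cyclic_meet)
  have ac: "cpnet_ac n m k (flat_net r1)" "cpnet_ac n m k (flat_net r2)"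
    using inj by (simp_all add: flat_net_ac inj_on_subset)
  obtain N where acN: "cpnet_ac n m k N"
    and inter: "concept n m X N = concept n m X (flat_net r1) \<inter> concept n m X (flat_net r2)"
    using intersection_closed_class_acD[OF closed ac] .
  define R where "R = snd N 0 (ctx (fst N) 0 (single 0))"
  have single_out: "x < m \<Longrightarrow> single x \<in> outcomes n m" for x
    using n unfolding outcomes_def single_def by auto
  have R_swap: "R x y = swap_pref N 0 (single x) (single y)" for x y
  proof -
    have "ctx (fst N) 0 (single y) = ctx (fst N) 0 (single 0)"
      using cpnet_ac_parents[OF acN] n by (intro ctx_cong) (auto simp: single_def)
    then show ?thesis unfolding swap_pref_def R_def by (simp add: single_def)
  qed
  have R_meet: "R x y = meet_pref q (rank_order r1) (rank_order r2) x y"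
    if "x < 3" "y < 3" "x \<noteq> y" for x y
  proof -
    have "swap_at n m 0 (single x) (single y)"
      using that n m single_out unfolding swap_at_def by (simp add: single_def)
    then show ?thesis
      using swap_pref_concept_inter[OF acN ac inter adm]
      unfolding R_swap meet_pref_def swap_pref_flat_net q_def by (simp add: single_def)
  qed
  have "strict_total_on {0..<m} R"
    unfolding R_def using cpnet_ac_strict_total[OF acN _ single_out] n m by simp
  then have st: "strict_total_on {0..<3} R" using m by (auto intro: strict_total_on_subset)
  have "R 0 1 = R 1 2" using cyclic(1) R_meet[of 0 1] R_meet[of 1 2] by simp
  moreover have "R 0 2 \<noteq> R 0 1" using cyclic(2) R_meet[of 0 2] R_meet[of 0 1] by simp
  ultimately show False using strict_total_on_three[OF st] by blast
qed

definition arc_net :: "nat \<Rightarrow> nat \<Rightarrow> (nat \<Rightarrow> nat \<Rightarrow> nat \<Rightarrow> bool) \<Rightarrow> (nat \<Rightarrow> nat \<Rightarrow> bool) \<Rightarrow> cpnet" where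
  "arc_net j i base alt = (\<lambda>v. if v = i then {j} else {}, \<lambda>v \<gamma>. if v = i \<and> \<gamma> j \<noteq> 0 then alt else base v)"

lemma arc_net_pref:
  "snd (arc_net j i base alt) v (ctx (fst (arc_net j i base alt)) v u) =
    (if v = i \<and> u j \<noteq> 0 then alt else base v)"
  unfolding arc_net_def ctx_def by simp

lemma swap_pref_arc_net:
  "swap_pref (arc_net j i base alt) v a b \<longleftrightarrow> (if v = i \<and> b j \<noteq> 0 then alt else base v) (a v) (b v)"
  unfolding swap_pref_def arc_net_pref by simp

lemma arc_net_ac:
  assumes ij: "i < n" "j < n" "j \<noteq> i" and k: "1 \<le> k"
    and base: "\<And>v. strict_total_on {0..<m} (base v)" and alt: "strict_total_on {0..<m} alt"
    and differ: "x < m" "y < m" "base i x y \<noteq> alt x y"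
  shows "cpnet_ac n m k (arc_net j i base alt)"
proof -
  let ?Pa = "fst (arc_net j i base alt)" and ?cpt = "snd (arc_net j i base alt)"
  have Pa: "?Pa v = (if v = i then {j} else {})" for v unfolding arc_net_def by simp
  have "x \<noteq> y"
  proof
    assume "x = y"
    then show False
      using differ strict_total_on_irrefl[OF base] strict_total_on_irrefl[OF alt] by auto
  qed
  then have m: "1 < m" using differ by linarith
  have "{(j', i'). i' < n \<and> j' \<in> ?Pa i'} = {(j, i)}"
    using ij unfolding Pa by auto
  moreover have "acyclic ({} :: (nat \<times> nat) set)" unfolding acyclic_def by simp
  ultimately have acyc: "acyclic {(j', i'). i' < n \<and> j' \<in> ?Pa i'}" using ij by simp
  have parents: "\<forall>v<n. ?Pa v \<subseteq> {0..<n} - {v}" and card: "\<forall>v<n. card (?Pa v) \<le> k"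
    using ij k by (simp_all add: Pa)
  have orders: "\<forall>v<n. \<forall>u\<in>outcomes n m. strict_total_on {0..<m} (?cpt v (ctx ?Pa v u))"
    using base alt by (simp add: arc_net_pref)
  have nondummy: "\<forall>v<n. \<forall>j'\<in>?Pa v. \<exists>u\<in>outcomes n m. \<exists>a<m. \<exists>x<m. \<exists>y<m.
      ?cpt v (ctx ?Pa v u) x y \<noteq> ?cpt v (ctx ?Pa v (u(j' := a))) x y"
  proof (intro allI impI ballI)
    fix v j' assume "v < n" "j' \<in> ?Pa v"
    then have "v = i" "j' = j" unfolding Pa by (auto split: if_splits)
    moreover have "(\<lambda>_. 0) \<in> outcomes n m" using m unfolding outcomes_def by simp
    ultimately show "\<exists>u\<in>outcomes n m. \<exists>a<m. \<exists>x<m. \<exists>y<m.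
      ?cpt v (ctx ?Pa v u) x y \<noteq> ?cpt v (ctx ?Pa v (u(j' := a))) x y"
      using m differ unfolding arc_net_pref by (intro bexI[of _ "\<lambda>_. 0"] exI[of _ 1]) auto
  qed
  show ?thesis unfolding cpnet_ac_def Let_def using parents card acyc orders nondummy by (intro conjI)
qed

lemma concept_inter_parent:
  assumes ac: "cpnet_ac n m k N" "cpnet_ac n m k N1" "cpnet_ac n m k N2"
    and inter: "concept n m X N = concept n m X N1 \<inter> concept n m X N2"
    and adm: "admissible_swap_space n m X"
    and sw: "swap_at n m i a b" "swap_at n m i a' b'"
    and off_j: "j \<noteq> i" "\<forall>l. l \<noteq> j \<longrightarrow> b' l = b l" "a' i = a i"
    and agree: "swap_pref N1 i a b" "swap_pref N2 i a b"
    and oriented: "(a', b') \<in> X" and disagree: "\<not> swap_pref N2 i a' b'"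
  shows "j \<in> fst N i"
proof (rule ccontr)
  assume "j \<notin> fst N i"
  then have "ctx (fst N) i b' = ctx (fst N) i b" using off_j(2) by (intro ctx_cong) auto
  then have "swap_pref N i a' b' = swap_pref N i a b"
    using off_j unfolding swap_pref_def by simp
  moreover have "swap_pref N i a b" "\<not> swap_pref N i a' b'"
    using swap_pref_concept_inter[OF ac inter adm sw(1)] swap_pref_concept_inter[OF ac inter adm sw(2)]
      agree oriented disagree unfolding meet_pref_def by auto
  ultimately show False by blast
qed

theorem not_intersection_closed_with_parents:
  assumes n: "2 \<le> n" and m: "2 \<le> m" and k: "1 \<le> k" and adm: "admissible_swap_space n m X"
  shows "\<not> intersection_closed (class_ac n m k X)"
proof
  assume closed: "intersection_closed (class_ac n m k X)"
  define pair where "pair x y = (\<lambda>_::nat. 0::nat)(0 := x, 1 := y)" for x y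
  define top where "top p = rank_order (transpose 0 p)" for p
  have top_first: "top a a b" "\<not> top b a b" if "b \<noteq> a" for a b
    using rank_order_transpose_first[OF that] unfolding top_def rank_order_def by auto
  have top_st: "strict_total_on {0..<m} (top p)" for p
    unfolding top_def by (simp add: strict_total_on_rank_order inj_on_transpose)
  have pair_out: "pair x y \<in> outcomes n m" if "x < 2" "y < 2" for x y
    using that n m unfolding outcomes_def pair_def by auto
  have sw0: "swap_at n m 0 (pair x y) (pair x' y)" if "x < 2" "x' < 2" "y < 2" "x \<noteq> x'" for x x' y
    using that n pair_out unfolding swap_at_def by (auto simp: pair_def)
  have sw1: "swap_at n m 1 (pair x y) (pair x y')" if "x < 2" "y < 2" "y' < 2" "y \<noteq> y'" for x y y'
    using that n pair_out unfolding swap_at_def by (auto simp: pair_def)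
  obtain a where a: "a < 2" and Xa: "(pair a 1, pair (1 - a) 1) \<in> X"
    using admissible_swap_space_choose[OF adm, of 0 "\<lambda>x. pair x 1"] sw0[of 0 1 1] by auto
  obtain c where c: "c < 2" and Xc: "(pair 1 c, pair 1 (1 - c)) \<in> X"
    using admissible_swap_space_choose[OF adm, of 1 "\<lambda>y. pair 1 y"] sw1[of 1 0 1] by auto
  have a': "1 - a < 2" "1 - a \<noteq> a" and c': "1 - c < 2" "1 - c \<noteq> c" using a c by arith+
  txt \<open>With the other variable at 0 both nets prefer a at variable 0 and c at variable 1;
    with it at 1 exactly one net reverses, on a swap that X orients against that net.\<close>
  define base where "base v = (if v = (0::nat) then top a else top c)" for v
  define N1 where "N1 = arc_net 0 1 base (top (1 - c))"
  define N2 where "N2 = arc_net 1 0 base (top (1 - a))"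
  have ac: "cpnet_ac n m k N1" "cpnet_ac n m k N2"
    unfolding N1_def N2_def using n m k a c a' c' top_st top_first[of "1 - c" c] top_first[of "1 - a" a]
    by (auto intro: arc_net_ac[where x = c and y = "1 - c"] arc_net_ac[where x = a and y = "1 - a"]
      simp: base_def)
  obtain N where acN: "cpnet_ac n m k N"
    and inter: "concept n m X N = concept n m X N1 \<inter> concept n m X N2"
    using intersection_closed_class_acD[OF closed ac] .
  have "1 \<in> fst N 0"
  proof (rule concept_inter_parent[OF acN ac inter adm sw0[of a "1 - a" 0] sw0[of a "1 - a" 1]])
    show "swap_pref N1 0 (pair a 0) (pair (1 - a) 0)" "swap_pref N2 0 (pair a 0) (pair (1 - a) 0)"
      "\<not> swap_pref N2 0 (pair a 1) (pair (1 - a) 1)"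
      unfolding N1_def N2_def swap_pref_arc_net using top_first[OF a'(2)] by (simp_all add: pair_def base_def)
  qed (use a a' Xa in \<open>simp_all add: pair_def\<close>)
  moreover have "0 \<in> fst N 1"
  proof (rule concept_inter_parent[OF acN ac(2,1) _ adm sw1[of 0 c "1 - c"] sw1[of 1 c "1 - c"]])
    show "swap_pref N2 1 (pair 0 c) (pair 0 (1 - c))" "swap_pref N1 1 (pair 0 c) (pair 0 (1 - c))"
      "\<not> swap_pref N1 1 (pair 1 c) (pair 1 (1 - c))"
      unfolding N1_def N2_def swap_pref_arc_net using top_first[OF c'(2)] by (simp_all add: pair_def base_def)
  qed (use inter c c' Xc in \<open>simp_all add: pair_def Int_commute\<close>)
  ultimately have "(0, 1) \<in> parent_rel N n" "(1, 0) \<in> parent_rel N n"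
    using n unfolding parent_rel_def by auto
  then have "(0, 0) \<in> (parent_rel N n)\<^sup>+" by (meson r_into_trancl trancl_into_trancl)
  then show False using cpnet_ac_acyclic[OF acN] unfolding acyclic_def by blast
qed

theorem proposition6:
  fixes n m k :: nat and X :: "((nat \<Rightarrow> nat) \<times> (nat \<Rightarrow> nat)) set"
  assumes "n \<ge> 1" and "m \<ge> 2" and "k \<le> n - 1" and "(m, k) \<noteq> (2, 0)"
    and "admissible_swap_space n m X"
  shows "\<not> intersection_closed (class_ac n m k X)"
proof (cases "k = 0")
  case True
  then have "3 \<le> m" using assms(2,4) by auto
  then show ?thesis using not_intersection_closed_three_values assms(1,5) by blast
next
  case False
  then show ?thesis using not_intersection_closed_with_parents assms(2,3,5) by simp
qed

end
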